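(* Let $G$ be a graph with no induced $P_7$, $C_4$ or $C_6$, and let $(B_1,\dots,B_5)$ be a nice blowup of $C_5$ in $G$. Then: (1) for each $i$, the vertices of $B_i$ can be ordered $b_i^1,\dots,b_i^{|B_i|}$ so that $N_{B_{i-1}\cup B_{i+1}}(b_i^1)\subseteq N_{B_{i-1}\cup B_{i+1}}(b_i^2)\subseteq\cdots\subseteq N_{B_{i-1}\cup B_{i+1}}(b_i^{|B_i|})$; (2) for each $i$, there is a vertex in $B_i$ complete to $B_{i-1}\cup B_{i+1}$; in particular, each vertex of $B_{i-1}$ and each vertex of $B_{i+1}$ have a common neighbor in $B_i$.
   Context: Indices modulo $5$. A tuple $(B_1,\dots,B_5)$ of subsets of $V(G)$ is a nice blowup of $C_5$ if: each $B_i$ is a clique and the $B_i$ are pairwise disjoint; every vertex of $B_i$ has a neighbor in $B_{i-1}$ and in $B_{i+1}$; $B_i$ is anticomplete to $B_{i+2}$; and there are no $a\in B_i$, distinct $b,c\in B_{i+1}$, $d\in B_{i+2}$ with $G[\{a,b,c,d\}]\cong P_4$. For $S\subseteq V(G)$ and a vertex $v$, $N_S(v)$ is the set of neighbors of $v$ in $S$. A vertex is complete to a set if it is adjacent to all its vertices. *)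

theory Defs
  imports Main
begin

definition graph :: "'a set \<Rightarrow> ('a \<Rightarrow> 'a \<Rightarrow> bool) \<Rightarrow> bool" where
  "graph V E \<longleftrightarrow> finite V \<and> (\<forall>u v. E u v \<longrightarrow> u \<in> V \<and> v \<in> V)
     \<and> (\<forall>u v. E u v \<longrightarrow> E v u) \<and> (\<forall>v. \<not> E v v)"

definition induced_path :: "'a set \<Rightarrow> ('a \<Rightarrow> 'a \<Rightarrow> bool) \<Rightarrow> 'a list \<Rightarrow> bool" where
  "induced_path V E vs \<longleftrightarrow> distinct vs \<and> set vs \<subseteq> V \<and>
     (\<forall>i<length vs. \<forall>j<length vs. E (vs ! i) (vs ! j) \<longleftrightarrow> (i = j + 1 \<or> j = i + 1))"

definition induced_cycle :: "'a set \<Rightarrow> ('a \<Rightarrow> 'a \<Rightarrow> bool) \<Rightarrow> 'a list \<Rightarrow> bool" where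
  "induced_cycle V E vs \<longleftrightarrow> distinct vs \<and> set vs \<subseteq> V \<and> length vs \<ge> 3 \<and>
     (\<forall>i<length vs. \<forall>j<length vs.
        E (vs ! i) (vs ! j) \<longleftrightarrow> (i = (j + 1) mod length vs \<or> j = (i + 1) mod length vs))"

definition has_induced_P :: "'a set \<Rightarrow> ('a \<Rightarrow> 'a \<Rightarrow> bool) \<Rightarrow> nat \<Rightarrow> bool" where
  "has_induced_P V E k \<longleftrightarrow> (\<exists>vs. length vs = k \<and> induced_path V E vs)"

definition has_induced_C :: "'a set \<Rightarrow> ('a \<Rightarrow> 'a \<Rightarrow> bool) \<Rightarrow> nat \<Rightarrow> bool" where
  "has_induced_C V E k \<longleftrightarrow> (\<exists>vs. length vs = k \<and> induced_cycle V E vs)"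

definition induces_P4 :: "'a set \<Rightarrow> ('a \<Rightarrow> 'a \<Rightarrow> bool) \<Rightarrow> 'a set \<Rightarrow> bool" where
  "induces_P4 V E S \<longleftrightarrow> (\<exists>vs. length vs = 4 \<and> set vs = S \<and> induced_path V E vs)"

definition clique :: "('a \<Rightarrow> 'a \<Rightarrow> bool) \<Rightarrow> 'a set \<Rightarrow> bool" where
  "clique E X \<longleftrightarrow> (\<forall>u\<in>X. \<forall>v\<in>X. u \<noteq> v \<longrightarrow> E u v)"

definition anticomplete :: "('a \<Rightarrow> 'a \<Rightarrow> bool) \<Rightarrow> 'a set \<Rightarrow> 'a set \<Rightarrow> bool" where
  "anticomplete E X Y \<longleftrightarrow> (\<forall>u\<in>X. \<forall>v\<in>Y. \<not> E u v)"

definition complete_to :: "('a \<Rightarrow> 'a \<Rightarrow> bool) \<Rightarrow> 'a \<Rightarrow> 'a set \<Rightarrow> bool" where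
  "complete_to E v X \<longleftrightarrow> (\<forall>u\<in>X. E v u)"

definition nbhd_in :: "('a \<Rightarrow> 'a \<Rightarrow> bool) \<Rightarrow> 'a set \<Rightarrow> 'a \<Rightarrow> 'a set" where
  "nbhd_in E S v = {u\<in>S. E v u}"

text \<open>Nice blowup of C_5; the parts are B 0, ..., B 4, indices taken modulo 5
  ((i+1) mod 5 is i+1, (i+4) mod 5 is i-1). Parts are nonempty (blowup of C_5).\<close>
definition nice_blowup_C5 :: "'a set \<Rightarrow> ('a \<Rightarrow> 'a \<Rightarrow> bool) \<Rightarrow> (nat \<Rightarrow> 'a set) \<Rightarrow> bool" where
  "nice_blowup_C5 V E B \<longleftrightarrow>
    (\<forall>i<5. B i \<subseteq> V \<and> B i \<noteq> {} \<and> clique E (B i)) \<and>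
    (\<forall>i<5. \<forall>j<5. i \<noteq> j \<longrightarrow> B i \<inter> B j = {}) \<and>
    (\<forall>i<5. \<forall>v\<in>B i. (\<exists>u\<in>B ((i + 4) mod 5). E v u) \<and> (\<exists>u\<in>B ((i + 1) mod 5). E v u)) \<and>
    (\<forall>i<5. anticomplete E (B i) (B ((i + 2) mod 5))) \<and>
    (\<forall>i<5. \<not> (\<exists>a b c d. a \<in> B i \<and> b \<in> B ((i + 1) mod 5) \<and> c \<in> B ((i + 1) mod 5) \<and> b \<noteq> c
               \<and> d \<in> B ((i + 2) mod 5) \<and> induces_P4 V E {a, b, c, d}))"

end

theory Submission
  imports Defs
begin

text \<open>Two vertices b, c of B(i) with incomparable neighbourhoods in B(i-1) \<union> B(i+1) have
  private neighbours x of b and y of c there. If x and y lie in the same part they are adjacent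
  and b-x-y-c is an induced C4; otherwise one lies in B(i-1), the other in B(i+1), and x-b-c-y
  is an induced P4 of the kind excluded by niceness. Hence these neighbourhoods form a finite
  chain, which can be listed increasingly, and its largest member contains every vertex of
  B(i-1) \<union> B(i+1), since each of those has a neighbour in B(i).\<close>

lemma finite_chain_sorted_list:
  assumes "finite S" and chain: "chain\<^sub>\<subseteq> (f ` S)" and fin: "\<And>x. x \<in> S \<Longrightarrow> finite (f x)"
  obtains bs where "distinct bs" "set bs = S" "sorted_wrt (\<lambda>x y. f x \<subseteq> f y) bs"
proof -
  obtain xs where xs: "set xs = S" "distinct xs"
    using finite_distinct_list[OF \<open>finite S\<close>] by blast
  define bs where "bs = sort_key (\<lambda>x. card (f x)) xs"
  have bs: "set bs = S" "distinct bs"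
    unfolding bs_def using xs by simp_all
  have sorted_card: "sorted_wrt (\<lambda>x y. card (f x) \<le> card (f y)) bs"
    using sorted_sort_key[of "\<lambda>x. card (f x)" xs] unfolding bs_def sorted_map .
  have mono: "f x \<subseteq> f y" if "x \<in> set bs" "y \<in> set bs" "card (f x) \<le> card (f y)" for x y
  proof -
    have "f x \<subseteq> f y \<or> f y \<subseteq> f x"
      using chain that(1,2) bs(1) unfolding chain_subset_def by blast
    then show ?thesis
      using card_seteq[OF fin _ that(3)] that(1) bs(1) by blast
  qed
  have "sorted_wrt (\<lambda>x y. f x \<subseteq> f y) bs"
    by (rule sorted_wrt_mono_rel[OF mono sorted_card])
  with bs show thesis
    using that by blast
qed

lemma finite_chain_has_greatest:
  assumes "finite S" "S \<noteq> {}" "chain\<^sub>\<subseteq> (f ` S)" "\<And>x. x \<in> S \<Longrightarrow> finite (f x)"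
  obtains v where "v \<in> S" "\<And>u. u \<in> S \<Longrightarrow> f u \<subseteq> f v"
proof -
  obtain bs where bs: "set bs = S" "sorted_wrt (\<lambda>x y. f x \<subseteq> f y) bs"
    using finite_chain_sorted_list[OF assms(1,3,4)] by blast
  obtain ys v where "bs = ys @ [v]"
    using \<open>S \<noteq> {}\<close> bs(1) by (metis rev_exhaust set_empty)
  with bs have "S = insert v (set ys)" "\<forall>u\<in>set ys. f u \<subseteq> f v"
    by (auto simp: sorted_wrt_append)
  then show thesis
    using that by blast
qed

lemma graph_sym: "graph V E \<Longrightarrow> E u v \<Longrightarrow> E v u"
  unfolding graph_def by blast

lemma graph_irrefl: "graph V E \<Longrightarrow> \<not> E v v"
  unfolding graph_def by blast

lemma graph_finite: "graph V E \<Longrightarrow> finite V"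
  unfolding graph_def by blast

lemma finite_nbhd_in: "graph V E \<Longrightarrow> finite (nbhd_in E S v)"
  unfolding graph_def nbhd_in_def by (auto intro: finite_subset)

lemma all_less_4: "(\<forall>i<(4::nat). P i) \<longleftrightarrow> P 0 \<and> P 1 \<and> P 2 \<and> P 3"
proof -
  have "{..<(4::nat)} = {0, 1, 2, 3}"
    by auto
  then show ?thesis
    by (metis insert_iff lessThan_iff empty_iff)
qed

lemma induces_P4I:
  assumes g: "graph V E" and "distinct [a, b, c, d]" "{a, b, c, d} \<subseteq> V"
    and "E a b" "E b c" "E c d" "\<not> E a c" "\<not> E b d" "\<not> E a d"
  shows "induces_P4 V E {a, b, c, d}"
proof -
  have "\<forall>i<4. \<forall>j<4. E ([a, b, c, d] ! i) ([a, b, c, d] ! j) \<longleftrightarrow> (i = j + 1 \<or> j = i + 1)"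
    using assms(4-9) graph_sym[OF g] graph_irrefl[OF g] by (simp add: all_less_4) blast
  with assms(2,3) show ?thesis
    unfolding induces_P4_def induced_path_def by (intro exI[of _ "[a, b, c, d]"]) auto
qed

lemma has_induced_C4I:
  assumes g: "graph V E" and "distinct [a, b, c, d]" "{a, b, c, d} \<subseteq> V"
    and "E a b" "E b c" "E c d" "E d a" "\<not> E a c" "\<not> E b d"
  shows "has_induced_C V E 4"
proof -
  have "\<forall>i<4. \<forall>j<4. E ([a, b, c, d] ! i) ([a, b, c, d] ! j) \<longleftrightarrow>
          (i = (j + 1) mod 4 \<or> j = (i + 1) mod 4)"
    using assms(4-9) graph_sym[OF g] graph_irrefl[OF g] by (simp add: all_less_4) blast
  with assms(2,3) show ?thesis
    unfolding has_induced_C_def induced_cycle_def by (intro exI[of _ "[a, b, c, d]"]) auto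
qed

lemma nbhd_chain_between_cliques:
  assumes g: "graph V E" and no_C4: "\<not> has_induced_C V E 4"
    and "P \<union> Q \<union> R \<subseteq> V" "clique E P" "clique E Q" "clique E R"
    and "anticomplete E P R" "(P \<union> R) \<inter> Q = {}"
    and no_P4: "\<And>a b c d. a \<in> P \<Longrightarrow> b \<in> Q \<Longrightarrow> c \<in> Q \<Longrightarrow> b \<noteq> c \<Longrightarrow> d \<in> R \<Longrightarrow>
                   \<not> induces_P4 V E {a, b, c, d}"
  shows "chain\<^sub>\<subseteq> (nbhd_in E (P \<union> R) ` Q)"
proof -
  have "nbhd_in E (P \<union> R) b \<subseteq> nbhd_in E (P \<union> R) c \<or> nbhd_in E (P \<union> R) c \<subseteq> nbhd_in E (P \<union> R) b"
    if bc: "b \<in> Q" "c \<in> Q" for b c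
  proof (rule ccontr)
    assume "\<not> ?thesis"
    then obtain x y where x: "x \<in> P \<union> R" "E b x" "\<not> E c x"
      and y: "y \<in> P \<union> R" "E c y" "\<not> E b y"
      unfolding nbhd_in_def by auto
    have "b \<noteq> c" "x \<noteq> y"
      using x y by auto
    then have "E b c"
      using bc \<open>clique E Q\<close> unfolding clique_def by blast
    have V: "{b, c, x, y} \<subseteq> V"
      using assms(3) bc x y by blast
    have outside: "x \<notin> Q" "y \<notin> Q"
      using assms(8) x y by blast+
    consider "E x y" | "x \<in> P" "y \<in> R" | "x \<in> R" "y \<in> P"
      using x y \<open>x \<noteq> y\<close> \<open>clique E P\<close> \<open>clique E R\<close> unfolding clique_def by blast
    then show False
    proof cases
      case 1
      have "has_induced_C V E 4"
        by (rule has_induced_C4I[OF g, of b x y c])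
          (use V outside bc \<open>b \<noteq> c\<close> \<open>x \<noteq> y\<close> x y 1 \<open>E b c\<close> graph_sym[OF g] in auto)
      with no_C4 show False ..
    next
      case 2
      have "induces_P4 V E {x, b, c, y}"
        by (rule induces_P4I[OF g])
          (use V outside bc \<open>b \<noteq> c\<close> \<open>x \<noteq> y\<close> x y 2 \<open>E b c\<close> \<open>anticomplete E P R\<close>
            graph_sym[OF g] in \<open>auto simp: anticomplete_def\<close>)
      with no_P4 2 bc \<open>b \<noteq> c\<close> show False by blast
    next
      case 3
      have "induces_P4 V E {y, c, b, x}"
        by (rule induces_P4I[OF g])
          (use V outside bc \<open>b \<noteq> c\<close> \<open>x \<noteq> y\<close> x y 3 \<open>E b c\<close> \<open>anticomplete E P R\<close>
            graph_sym[OF g] in \<open>auto simp: anticomplete_def\<close>)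
      with no_P4 3 bc \<open>b \<noteq> c\<close> show False by blast
    qed
  qed
  then show ?thesis
    unfolding chain_subset_def by blast
qed

lemma complete_to_of_greatest_nbhd:
  assumes "graph V E" "\<And>u. u \<in> X \<Longrightarrow> \<exists>w\<in>S. E u w"
    and "\<And>w. w \<in> S \<Longrightarrow> nbhd_in E X w \<subseteq> nbhd_in E X v"
  shows "complete_to E v X"
  using assms graph_sym[OF assms(1)] unfolding complete_to_def nbhd_in_def by blast

lemma nice_blowup_C5D:
  assumes "nice_blowup_C5 V E B" "i < 5"
  shows "B i \<subseteq> V" "B i \<noteq> {}" "clique E (B i)"
    and "\<And>j. j < 5 \<Longrightarrow> j \<noteq> i \<Longrightarrow> B i \<inter> B j = {}"
    and "\<And>v. v \<in> B i \<Longrightarrow> \<exists>u\<in>B ((i + 4) mod 5). E v u"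
    and "\<And>v. v \<in> B i \<Longrightarrow> \<exists>u\<in>B ((i + 1) mod 5). E v u"
    and "anticomplete E (B i) (B ((i + 2) mod 5))"
    and "\<And>a b c d. a \<in> B i \<Longrightarrow> b \<in> B ((i + 1) mod 5) \<Longrightarrow> c \<in> B ((i + 1) mod 5) \<Longrightarrow>
           b \<noteq> c \<Longrightarrow> d \<in> B ((i + 2) mod 5) \<Longrightarrow> \<not> induces_P4 V E {a, b, c, d}"
  using assms unfolding nice_blowup_C5_def by blast+

lemma nice_blowup_C5_finite_part:
  "graph V E \<Longrightarrow> nice_blowup_C5 V E B \<Longrightarrow> i < 5 \<Longrightarrow> finite (B i)"
  using finite_subset nice_blowup_C5D(1) graph_finite by metis

lemma nice_blowup_C5_nbhd_chain:
  assumes g: "graph V E" and no_C4: "\<not> has_induced_C V E 4"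
    and nice: "nice_blowup_C5 V E B" and "i < 5"
  shows "chain\<^sub>\<subseteq> (nbhd_in E (B ((i + 4) mod 5) \<union> B ((i + 1) mod 5)) ` B i)"
proof -
  define p r where "p = (i + 4) mod 5" and "r = (i + 1) mod 5"
  have idx: "p < 5" "r < 5" "(p + 1) mod 5 = i" "(p + 2) mod 5 = r" "p \<noteq> i" "r \<noteq> i"
    using \<open>i < 5\<close> unfolding p_def r_def by presburger+
  note Bp = nice_blowup_C5D[OF nice idx(1), unfolded idx(3,4)]
  note Bi = nice_blowup_C5D[OF nice \<open>i < 5\<close>]
  note Br = nice_blowup_C5D[OF nice idx(2)]
  have "chain\<^sub>\<subseteq> (nbhd_in E (B p \<union> B r) ` B i)"
  proof (rule nbhd_chain_between_cliques[OF g no_C4 _ Bp(3) Bi(3) Br(3) Bp(7) _ Bp(8)])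
    show "B p \<union> B i \<union> B r \<subseteq> V"
      using Bp(1) Bi(1) Br(1) by blast
    show "(B p \<union> B r) \<inter> B i = {}"
      using Bp(4)[OF \<open>i < 5\<close>] Br(4)[OF \<open>i < 5\<close>] idx(5,6) by blast
  qed
  then show ?thesis
    unfolding p_def r_def .
qed

lemma nice_blowup_C5_has_nbr_in_part:
  assumes nice: "nice_blowup_C5 V E B" and "i < 5"
    and u: "u \<in> B ((i + 4) mod 5) \<union> B ((i + 1) mod 5)"
  shows "\<exists>w\<in>B i. E u w"
proof -
  define p r where "p = (i + 4) mod 5" and "r = (i + 1) mod 5"
  have idx: "p < 5" "r < 5" "(p + 1) mod 5 = i" "(r + 4) mod 5 = i"
    using \<open>i < 5\<close> unfolding p_def r_def by presburger+
  show ?thesis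
    using u nice_blowup_C5D(6)[OF nice idx(1)] nice_blowup_C5D(5)[OF nice idx(2)]
    unfolding idx(3,4) p_def[symmetric] r_def[symmetric] by blast
qed

lemma nice_blowup_C5_sorted_nbhds:
  assumes g: "graph V E" and "\<not> has_induced_C V E 4" and nice: "nice_blowup_C5 V E B" and "i < 5"
  obtains bs where "distinct bs" "set bs = B i"
    "\<And>j. Suc j < length bs \<Longrightarrow> nbhd_in E (B ((i + 4) mod 5) \<union> B ((i + 1) mod 5)) (bs ! j)
                                 \<subseteq> nbhd_in E (B ((i + 4) mod 5) \<union> B ((i + 1) mod 5)) (bs ! Suc j)"
proof -
  obtain bs where "distinct bs" "set bs = B i"
    "sorted_wrt (\<lambda>x y. nbhd_in E (B ((i + 4) mod 5) \<union> B ((i + 1) mod 5)) x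
                     \<subseteq> nbhd_in E (B ((i + 4) mod 5) \<union> B ((i + 1) mod 5)) y) bs"
    using finite_chain_sorted_list nice_blowup_C5_finite_part[OF g nice \<open>i < 5\<close>]
      nice_blowup_C5_nbhd_chain[OF assms] finite_nbhd_in[OF g]
    by metis
  then show thesis
    using that sorted_wrt_nth_less[OF _ lessI] by blast
qed

lemma nice_blowup_C5_complete_vertex:
  assumes g: "graph V E" and "\<not> has_induced_C V E 4" and nice: "nice_blowup_C5 V E B" and "i < 5"
  obtains v where "v \<in> B i" "complete_to E v (B ((i + 4) mod 5) \<union> B ((i + 1) mod 5))"
proof -
  obtain v where v: "v \<in> B i" and greatest:
    "\<And>u. u \<in> B i \<Longrightarrow> nbhd_in E (B ((i + 4) mod 5) \<union> B ((i + 1) mod 5)) u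
                      \<subseteq> nbhd_in E (B ((i + 4) mod 5) \<union> B ((i + 1) mod 5)) v"
    using finite_chain_has_greatest nice_blowup_C5_finite_part[OF g nice \<open>i < 5\<close>]
      nice_blowup_C5D(2)[OF nice \<open>i < 5\<close>]
      nice_blowup_C5_nbhd_chain[OF assms] finite_nbhd_in[OF g]
    by metis
  have "complete_to E v (B ((i + 4) mod 5) \<union> B ((i + 1) mod 5))"
    by (rule complete_to_of_greatest_nbhd[OF g _ greatest])
      (rule nice_blowup_C5_has_nbr_in_part[OF nice \<open>i < 5\<close>])
  with v show thesis
    using that by blast
qed

theorem lemma4p1:
  fixes V :: "'a set" and E :: "'a \<Rightarrow> 'a \<Rightarrow> bool" and B :: "nat \<Rightarrow> 'a set"
  assumes "graph V E"
    and "\<not> has_induced_P V E 7" and "\<not> has_induced_C V E 4" and "\<not> has_induced_C V E 6"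
    and "nice_blowup_C5 V E B"
  shows "(\<forall>i<5. \<exists>bs. distinct bs \<and> set bs = B i \<and>
           (\<forall>j. Suc j < length bs \<longrightarrow>
              nbhd_in E (B ((i + 4) mod 5) \<union> B ((i + 1) mod 5)) (bs ! j)
              \<subseteq> nbhd_in E (B ((i + 4) mod 5) \<union> B ((i + 1) mod 5)) (bs ! Suc j))) \<and>
         (\<forall>i<5. (\<exists>v\<in>B i. complete_to E v (B ((i + 4) mod 5) \<union> B ((i + 1) mod 5))) \<and>
           (\<forall>x\<in>B ((i + 4) mod 5). \<forall>y\<in>B ((i + 1) mod 5). \<exists>z\<in>B i. E x z \<and> E y z))"
proof (intro conjI allI impI ballI)
  fix i :: nat
  assume "i < 5"
  then show "\<exists>bs. distinct bs \<and> set bs = B i \<and>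
           (\<forall>j. Suc j < length bs \<longrightarrow>
              nbhd_in E (B ((i + 4) mod 5) \<union> B ((i + 1) mod 5)) (bs ! j)
              \<subseteq> nbhd_in E (B ((i + 4) mod 5) \<union> B ((i + 1) mod 5)) (bs ! Suc j))"
    using nice_blowup_C5_sorted_nbhds[OF assms(1,3,5)] by metis
next
  fix i :: nat
  assume "i < 5"
  then show "\<exists>v\<in>B i. complete_to E v (B ((i + 4) mod 5) \<union> B ((i + 1) mod 5))"
    using nice_blowup_C5_complete_vertex[OF assms(1,3,5)] by metis
next
  fix i :: nat and x y
  assume i: "i < 5" and xy: "x \<in> B ((i + 4) mod 5)" "y \<in> B ((i + 1) mod 5)"
  obtain v where "v \<in> B i" "complete_to E v (B ((i + 4) mod 5) \<union> B ((i + 1) mod 5))"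
    using nice_blowup_C5_complete_vertex[OF assms(1,3,5) i] .
  with xy show "\<exists>z\<in>B i. E x z \<and> E y z"
    using graph_sym[OF assms(1)] unfolding complete_to_def by blast
qed

end
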